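(* Let $h$ be a fixed-point-free isometry of order $3$ of the $E_8$ root lattice. In $E_8\perp E_8$ let $M=\{(x,x):x\in E_8\}$ and $M'=\{(hx,x):x\in E_8\}$. Then $M+M'$ contains no vectors of norm $2$ (it is rootless). *)

theory Defs
  imports "HOL-Analysis.Analysis"
begin

definition E8 :: "(real^8) set" where
  "E8 = {x. ((\<forall>i. x$i \<in> \<int>) \<or> (\<forall>i. x$i - 1/2 \<in> \<int>))
            \<and> (\<exists>k::int. (\<Sum>i\<in>UNIV. x$i) = 2 * of_int k)}"

text \<open>An isometry of E8: a bijection of the lattice preserving the inner product
(such a map is automatically additive, i.e. a lattice automorphism).\<close>
definition E8_isometry :: "(real^8 \<Rightarrow> real^8) \<Rightarrow> bool" where
  "E8_isometry h \<longleftrightarrow> bij_betw h E8 E8 \<and> (\<forall>x\<in>E8. \<forall>y\<in>E8. inner (h x) (h y) = inner x y)"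

definition E8_order3 :: "(real^8 \<Rightarrow> real^8) \<Rightarrow> bool" where
  "E8_order3 h \<longleftrightarrow> (\<forall>x\<in>E8. h (h (h x)) = x) \<and> (\<exists>x\<in>E8. h x \<noteq> x)"

definition fixed_point_free :: "(real^8 \<Rightarrow> real^8) \<Rightarrow> bool" where
  "fixed_point_free h \<longleftrightarrow> (\<forall>x\<in>E8. h x = x \<longrightarrow> x = 0)"

end

theory Submission
  imports Defs
begin

text \<open>
  Write a vector of \<open>M + M'\<close> as \<open>(x + h y, x + y)\<close> with \<open>x, y \<in> E8\<close>. Both components lie
  in the even lattice \<open>E8\<close>, so if the norm is 2 one of them vanishes and the other is
  \<open>\<plusminus>(y - h y)\<close>. For a fixed-point-free isometry of order 3 we have \<open>z + h z + h\<^sup>2 z = 0\<close>,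
  whence \<open>2\<langle>z, h z\<rangle> = -\<langle>z, z\<rangle>\<close> and \<open>\<langle>z - h z, z - h z\<rangle> = 3\<langle>z, z\<rangle> \<in> 6\<int>\<close>, which is never 2.
\<close>

lemma inner_preserving_imp_additive:
  fixes h :: "'a::real_inner \<Rightarrow> 'b::real_inner"
  assumes inner_h: "\<forall>x\<in>S. \<forall>y\<in>S. inner (h x) (h y) = inner x y"
    and "a \<in> S" "b \<in> S" "a + b \<in> S"
  shows "h (a + b) = h a + h b"
proof -
  let ?d = "h (a + b) - h a - h b"
  have "inner ?d ?d = inner (h (a+b)) (h (a+b)) + inner (h a) (h a) + inner (h b) (h b)
     - 2 * inner (h (a+b)) (h a) - 2 * inner (h (a+b)) (h b) + 2 * inner (h a) (h b)"
    by (simp add: inner_diff_left inner_diff_right inner_commute algebra_simps)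
  also have "\<dots> = inner (a+b) (a+b) + inner a a + inner b b
     - 2 * inner (a+b) a - 2 * inner (a+b) b + 2 * inner a b"
    using inner_h assms(2-4) by simp
  also have "\<dots> = 0"
    by (simp add: inner_add_left inner_add_right inner_commute algebra_simps)
  finally have "?d = 0"
    by simp
  then show ?thesis
    by (simp add: algebra_simps)
qed

lemma order3_fixed_point_free_isometry_inner_diff:
  fixes h :: "'a::real_inner \<Rightarrow> 'a"
  assumes add_closed: "\<And>x y. x \<in> S \<Longrightarrow> y \<in> S \<Longrightarrow> x + y \<in> S"
    and maps_to: "\<And>x. x \<in> S \<Longrightarrow> h x \<in> S"
    and inner_h: "\<forall>x\<in>S. \<forall>y\<in>S. inner (h x) (h y) = inner x y"
    and order3: "\<And>x. x \<in> S \<Longrightarrow> h (h (h x)) = x"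
    and fixed_point_free: "\<And>x. x \<in> S \<Longrightarrow> h x = x \<Longrightarrow> x = 0"
    and "z \<in> S"
  shows "inner (z - h z) (z - h z) = 3 * inner z z"
proof -
  have hz: "h z \<in> S" and hhz: "h (h z) \<in> S"
    using \<open>z \<in> S\<close> maps_to by auto
  have additive: "h (a + b) = h a + h b" if "a \<in> S" "b \<in> S" for a b
    using inner_preserving_imp_additive[OF inner_h] that add_closed by blast
  let ?w = "z + h z + h (h z)"
  have "h ?w = h z + h (h z) + z"
    using additive add_closed order3 \<open>z \<in> S\<close> hz hhz by simp
  then have "?w = 0"
    using fixed_point_free add_closed \<open>z \<in> S\<close> hz hhz by (simp add: algebra_simps)
  then have hh: "h (h z) = - z - h z"
    by (simp add: algebra_simps eq_neg_iff_add_eq_0)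
  have "inner (h z) z = inner (h z) (h (h (h z)))"
    using order3 \<open>z \<in> S\<close> by simp
  also have "\<dots> = inner z (h (h z))"
    using inner_h \<open>z \<in> S\<close> hhz by blast
  finally have "2 * inner z (h z) = - inner z z"
    unfolding hh by (simp add: inner_diff_right inner_commute)
  moreover have "inner (h z) (h z) = inner z z"
    using inner_h \<open>z \<in> S\<close> by blast
  ultimately show ?thesis
    by (simp add: inner_diff_left inner_diff_right inner_commute)
qed

lemma E8_add: "x \<in> E8 \<Longrightarrow> y \<in> E8 \<Longrightarrow> x + y \<in> E8"
proof -
  have half_half: "a + b \<in> \<int>" if "a - 1/2 \<in> \<int>" "b - 1/2 \<in> \<int>" for a b :: real
  proof -
    have "a + b = (a - 1/2) + (b - 1/2) + 1"
      by simp
    then show ?thesis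
      using that by (metis Ints_add Ints_1)
  qed
  have int_half: "a + b - 1/2 \<in> \<int>" if "a \<in> \<int>" "b - 1/2 \<in> \<int>" for a b :: real
    using Ints_add[OF that] by (simp add: add_diff_eq)
  assume "x \<in> E8" "y \<in> E8"
  then obtain k l :: int where
    "(\<Sum>i\<in>UNIV. x$i) = 2 * of_int k" "(\<Sum>i\<in>UNIV. y$i) = 2 * of_int l"
    and x_coords: "(\<forall>i. x$i \<in> \<int>) \<or> (\<forall>i. x$i - 1/2 \<in> \<int>)"
    and y_coords: "(\<forall>i. y$i \<in> \<int>) \<or> (\<forall>i. y$i - 1/2 \<in> \<int>)"
    unfolding E8_def by auto
  then have "(\<Sum>i\<in>UNIV. (x + y)$i) = 2 * of_int (k + l)"
    by (simp add: sum.distrib algebra_simps)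
  moreover have "(\<forall>i. (x + y)$i \<in> \<int>) \<or> (\<forall>i. (x + y)$i - 1/2 \<in> \<int>)"
    using x_coords y_coords half_half int_half int_half[of "y$_" "x$_"]
    by (auto simp: add.commute)
  ultimately show "x + y \<in> E8"
    unfolding E8_def by blast
qed

lemma even_sum_squares:
  fixes n :: "'a \<Rightarrow> int"
  assumes "even (\<Sum>i\<in>A. n i)"
  shows "even (\<Sum>i\<in>A. n i * n i)"
proof -
  have "(\<Sum>i\<in>A. n i * n i) = (\<Sum>i\<in>A. n i) + (\<Sum>i\<in>A. n i * n i - n i)"
    by (simp add: sum.distrib[symmetric])
  moreover have "even (\<Sum>i\<in>A. n i * n i - n i)"
    by (rule dvd_sum) simp
  ultimately show ?thesis
    using assms by simp
qed

lemma E8_norm_even: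
  assumes "x \<in> E8"
  shows "\<exists>k::int. inner x x = 2 * of_int k"
proof -
  have inner_x: "inner x x = (\<Sum>i\<in>UNIV. x$i * x$i)"
    by (simp add: inner_vec_def)
  from assms obtain k :: int where k: "(\<Sum>i\<in>UNIV. x$i) = 2 * of_int k"
    and "(\<forall>i. x$i \<in> \<int>) \<or> (\<forall>i. x$i - 1/2 \<in> \<int>)"
    unfolding E8_def by auto
  then show ?thesis
  proof (elim disjE)
    assume int_coords: "\<forall>i. x$i \<in> \<int>"
    define n where "n i = \<lfloor>x$i\<rfloor>" for i
    have n: "x$i = of_int (n i)" for i
      using int_coords unfolding n_def by (metis Ints_cases floor_of_int)
    have "of_int (\<Sum>i\<in>UNIV. n i) = (of_int (2 * k) :: real)"
      using k n by simp
    then have "even (\<Sum>i\<in>UNIV. n i)"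
      by (metis dvd_triv_left of_int_eq_iff)
    then obtain m where "(\<Sum>i\<in>UNIV. n i * n i) = 2 * m"
      using even_sum_squares by blast
    then show ?thesis
      using inner_x n by (intro exI[of _ m]) (simp flip: of_int_mult of_int_sum)
  next
    assume half_coords: "\<forall>i. x$i - 1/2 \<in> \<int>"
    define n where "n i = \<lfloor>x$i - 1/2\<rfloor>" for i
    have n: "x$i = of_int (n i) + 1/2" for i
      using half_coords unfolding n_def by (metis Ints_cases floor_of_int diff_add_cancel)
    have "even (\<Sum>i\<in>UNIV. n i * n i + n i)"
      by (rule dvd_sum) simp
    then obtain m where m: "(\<Sum>i\<in>UNIV. n i * n i + n i) = 2 * m"
      by blast
    \<comment> \<open>the eight summands \<open>1/4\<close> contribute exactly 2\<close>
    have "inner x x = (\<Sum>i\<in>UNIV. of_int (n i * n i + n i) + 1/4)"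
      using inner_x n by (simp add: algebra_simps)
    also have "\<dots> = of_int (\<Sum>i\<in>UNIV. n i * n i + n i) + 2"
      by (simp add: sum.distrib)
    finally show ?thesis
      using m by (intro exI[of _ "m + 1"]) simp
  qed
qed

lemma E8_pair_norm_2_imp_zero:
  assumes "a \<in> E8" "b \<in> E8" "inner a a + inner b b = 2"
  shows "a = 0 \<or> b = 0"
proof -
  obtain k l :: int where k: "inner a a = 2 * of_int k" and l: "inner b b = 2 * of_int l"
    using E8_norm_even assms(1,2) by meson
  have "0 \<le> k" "0 \<le> l" "k + l = 1"
    using k l assms(3) inner_ge_zero[of a] inner_ge_zero[of b] by auto
  then have "k = 0 \<or> l = 0"
    by linarith
  then show ?thesis
    using k l by auto
qed

lemma E8_isometry_maps_to: "E8_isometry h \<Longrightarrow> x \<in> E8 \<Longrightarrow> h x \<in> E8"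
  unfolding E8_isometry_def by (meson bij_betwE)

lemma E8_fixed_point_free_order3_diff_norm_neq_2:
  assumes "E8_isometry h" "E8_order3 h" "fixed_point_free h" "z \<in> E8"
  shows "inner (z - h z) (z - h z) \<noteq> 2"
proof
  assume "inner (z - h z) (z - h z) = 2"
  moreover have "inner (z - h z) (z - h z) = 3 * inner z z"
    using order3_fixed_point_free_isometry_inner_diff[of E8 h z] assms E8_add E8_isometry_maps_to
    unfolding E8_isometry_def E8_order3_def fixed_point_free_def by blast
  moreover obtain k :: int where "inner z z = 2 * of_int k"
    using E8_norm_even assms(4) by blast
  ultimately have "6 * k = 2"
    by linarith
  then show False
    by presburger
qed

theorem lemma2p6:
  fixes h :: "real^8 \<Rightarrow> real^8"
  assumes "E8_isometry h" and "E8_order3 h" and "fixed_point_free h"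
  defines "M \<equiv> {(x, x) | x. x \<in> E8}"
      and "M' \<equiv> {(h x, x) | x. x \<in> E8}"
  shows "\<forall>v \<in> {m + m' | m m'. m \<in> M \<and> m' \<in> M'}. inner v v \<noteq> 2"
proof (intro ballI notI)
  fix v assume "v \<in> {m + m' | m m'. m \<in> M \<and> m' \<in> M'}" and v_root: "inner v v = 2"
  then obtain x y where "x \<in> E8" "y \<in> E8" and v: "v = (x + h y, x + y)"
    unfolding M_def M'_def by auto
  then have "x + h y = 0 \<or> x + y = 0"
    using E8_pair_norm_2_imp_zero E8_add E8_isometry_maps_to assms(1) v_root by simp
  then have "x = - h y \<or> x = - y"
    by (simp add: eq_neg_iff_add_eq_0)
  then have "inner (y - h y) (y - h y) = inner v v"
    using v by (auto simp: inner_diff_left inner_diff_right inner_add_left inner_add_right inner_commute)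
  then show False
    using E8_fixed_point_free_order3_diff_norm_neq_2 assms(1-3) \<open>y \<in> E8\<close> v_root by simp
qed

end
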